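(* The inquisitive disjunction $\vee$ is strongly undefinable in extended propositional dependence logic $\mathcal D^+$. Concretely: for every context $\varphi(a,b)$ of $\mathcal D^+$ and every pair of distinct propositional letters $p,q$ not occurring in $\varphi(a,b)$, letting $M_{pq}$ be the model with worlds $w_1,w_2,w_3$ in which $p$ is true exactly at $w_1,w_2$, $q$ is true exactly at $w_2,w_3$, and all other letters are false everywhere, we have $\varphi(=\!(p),=\!(q))\not\equiv_{M_{pq}}=\!(p)\vee=\!(q)$; in particular $\varphi(=\!(p),=\!(q))\not\equiv=\!(p)\vee=\!(q)$.
   Context: Formulas of $\mathcal D^+$: $\varphi::= p\mid\neg p\mid\bot\mid=\!(\alpha_1,\dots,\alpha_n;\beta)\mid\varphi\land\varphi\mid\varphi\otimes\varphi$, where $p$ is a propositional letter and $\alpha_1,\dots,\alpha_n,\beta$ are classical formulas (formulas built from $p,\neg p,\bot,\land,\otimes$ without dependence atoms); $=\!(\beta)$ denotes the case $n=0$. A context $\varphi(a,b)$ is a $\mathcal D^+$ formula in which the letters $a,b$ do not occur negated nor inside a dependence atom; $\varphi(\psi,\chi)$ replaces $a$ by $\psi$ and $b$ by $\chi$. A model is $M=(W,V)$, $V(w)$ the set of letters true at $w$. Support at $s\subseteq W$: $s\models p$ iff $p$ true at all $w\in s$; $s\models\neg p$ iff $p$ false at all $w\in s$; $s\models\bot$ iff $s=\emptyset$; $s\models\psi\land\chi$ iff both; $s\models\psi\otimes\chi$ iff $s=t_1\cup t_2$ with $t_1\models\psi$, $t_2\models\chi$; $s\models=\!(\alpha_1,\dots,\alpha_n;\beta)$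 iff for all $w,w'\in s$, if ($\{w\}\models\alpha_1\land\dots\land\alpha_n$ iff $\{w'\}\models\alpha_1\land\dots\land\alpha_n$) then ($\{w\}\models\beta$ iff $\{w'\}\models\beta$); $s\models\psi\vee\chi$ iff $s\models\psi$ or $s\models\chi$ (inquisitive disjunction, not in $\mathcal D^+$). $\psi\equiv_M\chi$: same supporting states in $M$; $\psi\equiv\chi$: $\psi\equiv_M\chi$ for all $M$. Strong undefinability of a binary connective $\circ$ means: there are formulas $\psi,\chi$ and a model $M$ such that for every template (here: context) $\varphi(a,b)$, $\varphi(\psi',\chi')\not\equiv_{M'}\psi'\circ\chi'$, where $\psi',\chi'$ differ from $\psi,\chi$ only by renaming of atoms and $M'$ is isomorphic to $M$. *)

theory Defs
  imports Main
begin

text \<open>Propositional letters are natural numbers.  Formulas of D+ (with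
  classicality of the arguments of dependence atoms expressed by a predicate),
  plus the inquisitive disjunction (not part of D+).\<close>

datatype form =
    Atom nat
  | NegAtom nat
  | Bot
  | Dep "form list" form
  | Conj form form
  | Tens form form
  | IDisj form form

fun classical :: "form \<Rightarrow> bool" where
  "classical (Atom p) = True"
| "classical (NegAtom p) = True"
| "classical Bot = True"
| "classical (Dep as b) = False"
| "classical (Conj f g) = (classical f \<and> classical g)"
| "classical (Tens f g) = (classical f \<and> classical g)"
| "classical (IDisj f g) = False"

fun dplus :: "form \<Rightarrow> bool" where
  "dplus (Atom p) = True"
| "dplus (NegAtom p) = True"
| "dplus Bot = True"
| "dplus (Dep as b) = ((\<forall>a\<in>set as. classical a) \<and> classical b)"
| "dplus (Conj f g) = (dplus f \<and> dplus g)"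
| "dplus (Tens f g) = (dplus f \<and> dplus g)"
| "dplus (IDisj f g) = False"

fun letters :: "form \<Rightarrow> nat set" where
  "letters (Atom p) = {p}"
| "letters (NegAtom p) = {p}"
| "letters Bot = {}"
| "letters (Dep as b) = (\<Union>a\<in>set as. letters a) \<union> letters b"
| "letters (Conj f g) = letters f \<union> letters g"
| "letters (Tens f g) = letters f \<union> letters g"
| "letters (IDisj f g) = letters f \<union> letters g"

fun bad_letters :: "form \<Rightarrow> nat set" where
  "bad_letters (Atom p) = {}"
| "bad_letters (NegAtom p) = {p}"
| "bad_letters Bot = {}"
| "bad_letters (Dep as b) = letters (Dep as b)"
| "bad_letters (Conj f g) = bad_letters f \<union> bad_letters g"
| "bad_letters (Tens f g) = bad_letters f \<union> bad_letters g"
| "bad_letters (IDisj f g) = bad_letters f \<union> bad_letters g"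

definition is_context :: "form \<Rightarrow> nat \<Rightarrow> nat \<Rightarrow> bool" where
  "is_context phi a b \<longleftrightarrow> a \<noteq> b \<and> dplus phi \<and> a \<notin> bad_letters phi \<and> b \<notin> bad_letters phi"

fun subst2 :: "form \<Rightarrow> nat \<Rightarrow> nat \<Rightarrow> form \<Rightarrow> form \<Rightarrow> form" where
  "subst2 (Atom p) a b psi chi = (if p = a then psi else if p = b then chi else Atom p)"
| "subst2 (NegAtom p) a b psi chi = NegAtom p"
| "subst2 Bot a b psi chi = Bot"
| "subst2 (Dep as c) a b psi chi = Dep as c"
| "subst2 (Conj f g) a b psi chi = Conj (subst2 f a b psi chi) (subst2 g a b psi chi)"
| "subst2 (Tens f g) a b psi chi = Tens (subst2 f a b psi chi) (subst2 g a b psi chi)"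
| "subst2 (IDisj f g) a b psi chi = IDisj (subst2 f a b psi chi) (subst2 g a b psi chi)"

text \<open>Team semantics; V w is the set of letters true at world w.
  Worlds are drawn from an arbitrary type; teams are sets of worlds.\<close>
fun supp :: "('w \<Rightarrow> nat set) \<Rightarrow> 'w set \<Rightarrow> form \<Rightarrow> bool" where
  "supp V s (Atom p) = (\<forall>w\<in>s. p \<in> V w)"
| "supp V s (NegAtom p) = (\<forall>w\<in>s. p \<notin> V w)"
| "supp V s Bot = (s = {})"
| "supp V s (Dep as b) = (\<forall>w\<in>s. \<forall>w'\<in>s.
      ((\<forall>a\<in>set as. supp V {w} a) \<longleftrightarrow> (\<forall>a\<in>set as. supp V {w'} a))
      \<longrightarrow> (supp V {w} b \<longleftrightarrow> supp V {w'} b))"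
| "supp V s (Conj f g) = (supp V s f \<and> supp V s g)"
| "supp V s (Tens f g) = (\<exists>t1 t2. s = t1 \<union> t2 \<and> supp V t1 f \<and> supp V t2 g)"
| "supp V s (IDisj f g) = (supp V s f \<or> supp V s g)"

definition equiv_in :: "'w set \<Rightarrow> ('w \<Rightarrow> nat set) \<Rightarrow> form \<Rightarrow> form \<Rightarrow> bool" where
  "equiv_in W V f g \<longleftrightarrow> (\<forall>s. s \<subseteq> W \<longrightarrow> (supp V s f \<longleftrightarrow> supp V s g))"

text \<open>Global equivalence: equivalent in every model (worlds of type nat suffice
  to host the models considered; we quantify over all W :: nat set and V).\<close>
definition equiv_all :: "form \<Rightarrow> form \<Rightarrow> bool" where
  "equiv_all f g \<longleftrightarrow> (\<forall>(W::nat set) V. equiv_in W V f g)"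

abbreviation const_atom :: "form \<Rightarrow> form" where
  "const_atom beta \<equiv> Dep [] beta"

definition Wpq :: "nat set" where "Wpq = {1,2,3}"

definition Vpq :: "nat \<Rightarrow> nat \<Rightarrow> nat \<Rightarrow> nat set" where
  "Vpq p q w = (if w = 1 then {p} else if w = 2 then {p,q} else if w = 3 then {q} else {})"

end

theory Submission
  imports Defs
begin

(* In M_pq every letter other than p and q is false at all worlds, so a formula without p and q
   is supported either by every nonempty team or by none.  By induction on the context,
   phi(=(p),=(q)) is therefore either supported by no nonempty team or true at every world, and it
   is supported by {w1,w3} whenever it is supported by {w1,w2} and {w2,w3}: in a tensor whose
   sides are both true at every world, {w1,w3} splits as {w1} and {w3}.  The disjunction
   =(p) \<or> =(q) fails this last property, since p \<noteq> q. *)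

lemma supp_empty: "supp V {} f"
  by (induction f) auto

lemma supp_cong:
  assumes "\<forall>w\<in>s. \<forall>l\<in>letters f. l \<in> V w \<longleftrightarrow> l \<in> V' w"
  shows "supp V s f \<longleftrightarrow> supp V' s f"
  using assms
proof (induction f arbitrary: s)
  case (Dep as c)
  have "supp V {w} a \<longleftrightarrow> supp V' {w} a" if "w \<in> s" "a \<in> set as" for w a
    using Dep.IH(1)[OF that(2), of "{w}"] Dep.prems that by auto
  then have "(\<forall>a\<in>set as. supp V {w} a) \<longleftrightarrow> (\<forall>a\<in>set as. supp V' {w} a)" if "w \<in> s" for w
    using that by blast
  moreover have "supp V {w} c \<longleftrightarrow> supp V' {w} c" if "w \<in> s" for w
    using Dep.IH(2)[of "{w}"] Dep.prems that by auto
  ultimately show ?case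
    by (simp only: supp.simps) (intro ball_cong; simp)
next
  case (Tens f g)
  have "supp V t f \<longleftrightarrow> supp V' t f" "supp V t g \<longleftrightarrow> supp V' t g" if "t \<subseteq> s" for t
    using Tens.IH Tens.prems that by (simp_all add: subset_iff)
  then show ?case by (metis Un_upper1 Un_upper2 supp.simps(6))
qed auto

lemma supp_image: "supp V (h ` s) f \<longleftrightarrow> supp (V \<circ> h) s f"
proof (induction f arbitrary: s)
  case (Dep as c)
  show ?case using Dep.IH[where s = "{_}"] by simp
next
  case (Tens f g)
  show ?case
  proof
    assume "supp V (h ` s) (Tens f g)"
    then obtain t u where "h ` s = t \<union> u" "supp V t f" "supp V u g" by auto
    then have "s = {w\<in>s. h w \<in> t} \<union> {w\<in>s. h w \<in> u}"
      and "h ` {w\<in>s. h w \<in> t} = t" "h ` {w\<in>s. h w \<in> u} = u" by auto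
    with Tens.IH show "supp (V \<circ> h) s (Tens f g)"
      by (metis \<open>supp V t f\<close> \<open>supp V u g\<close> supp.simps(6))
  next
    assume "supp (V \<circ> h) s (Tens f g)"
    then obtain t u where "s = t \<union> u" "supp (V \<circ> h) t f" "supp (V \<circ> h) u g" by auto
    with Tens.IH show "supp V (h ` s) (Tens f g)"
      by (metis image_Un supp.simps(6))
  qed
qed auto

lemma supp_letter_free_nonempty:
  assumes "\<forall>w\<in>s \<union> t. V w \<inter> letters f = {}" and "s \<noteq> {}" and "t \<noteq> {}"
  shows "supp V s f \<longleftrightarrow> supp V t f"
proof -
  have "supp V s f \<longleftrightarrow> supp (\<lambda>_. {}) {()} f" if "\<forall>w\<in>s. V w \<inter> letters f = {}" "s \<noteq> {}" for s
  proof -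
    have "supp V s f \<longleftrightarrow> supp ((\<lambda>_. {}) \<circ> (\<lambda>_. ())) s f"
      using that(1) by (intro supp_cong) (simp add: disjoint_iff; blast)
    also have "\<dots> \<longleftrightarrow> supp (\<lambda>_. {}) ((\<lambda>_. ()) ` s) f"
      by (rule supp_image[symmetric])
    also have "(\<lambda>_. ()) ` s = {()}"
      using that(2) by blast
    finally show ?thesis .
  qed
  then show ?thesis
    using assms by (metis Un_iff)
qed

lemma supp_TensI1: "supp V s f \<Longrightarrow> supp V s (Tens f g)"
  unfolding supp.simps(6) by (intro exI[of _ s] exI[of _ "{}"]) (simp add: supp_empty)

lemma supp_TensI2: "supp V s g \<Longrightarrow> supp V s (Tens f g)"
  unfolding supp.simps(6) by (intro exI[of _ "{}"] exI[of _ s]) (simp add: supp_empty)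

lemma supp_Tens_unsat_left:
  assumes "\<forall>t\<subseteq>W. t \<noteq> {} \<longrightarrow> \<not> supp V t f" and "s \<subseteq> W"
  shows "supp V s (Tens f g) \<longleftrightarrow> supp V s g"
proof
  assume "supp V s (Tens f g)"
  then obtain t u where tu: "s = t \<union> u" "supp V t f" "supp V u g"
    by auto
  with assms have "t = {}"
    by blast
  with tu show "supp V s g"
    by simp
qed (rule supp_TensI2)

lemma supp_Tens_unsat_right:
  assumes "\<forall>t\<subseteq>W. t \<noteq> {} \<longrightarrow> \<not> supp V t g" and "s \<subseteq> W"
  shows "supp V s (Tens f g) \<longleftrightarrow> supp V s f"
proof
  assume "supp V s (Tens f g)"
  then obtain t u where tu: "s = t \<union> u" "supp V t f" "supp V u g"
    by auto
  with assms have "u = {}"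
    by blast
  with tu show "supp V s f"
    by simp
qed (rule supp_TensI1)

definition unsat_or_pointwise_true :: "'w set \<Rightarrow> ('w \<Rightarrow> nat set) \<Rightarrow> form \<Rightarrow> bool" where
  "unsat_or_pointwise_true W V f \<longleftrightarrow>
     (\<forall>s\<subseteq>W. s \<noteq> {} \<longrightarrow> \<not> supp V s f) \<or> (\<forall>w\<in>W. supp V {w} f)"

definition transitive_at :: "('w \<Rightarrow> nat set) \<Rightarrow> 'w \<Rightarrow> 'w \<Rightarrow> 'w \<Rightarrow> form \<Rightarrow> bool" where
  "transitive_at V x y z f \<longleftrightarrow> (supp V {x, y} f \<longrightarrow> supp V {y, z} f \<longrightarrow> supp V {x, z} f)"

lemma unsat_or_pointwise_true_Dep: "unsat_or_pointwise_true W V (Dep as b)"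
  unfolding unsat_or_pointwise_true_def by simp

lemma unsat_or_pointwise_true_Conj:
  "unsat_or_pointwise_true W V f \<Longrightarrow> unsat_or_pointwise_true W V g
    \<Longrightarrow> unsat_or_pointwise_true W V (Conj f g)"
  unfolding unsat_or_pointwise_true_def by auto

lemma unsat_or_pointwise_true_Tens:
  assumes "unsat_or_pointwise_true W V f" and "unsat_or_pointwise_true W V g"
  shows "unsat_or_pointwise_true W V (Tens f g)"
  using assms(1)[unfolded unsat_or_pointwise_true_def]
proof
  assume "\<forall>s\<subseteq>W. s \<noteq> {} \<longrightarrow> \<not> supp V s f"
  then have "supp V s (Tens f g) \<longleftrightarrow> supp V s g" if "s \<subseteq> W" for s
    using supp_Tens_unsat_left that by metis
  with assms(2) show ?thesis
    unfolding unsat_or_pointwise_true_def by (simp del: supp.simps(6))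
next
  assume "\<forall>w\<in>W. supp V {w} f"
  then show ?thesis
    unfolding unsat_or_pointwise_true_def using supp_TensI1 by blast
qed

lemma transitive_at_Conj:
  "transitive_at V x y z f \<Longrightarrow> transitive_at V x y z g \<Longrightarrow> transitive_at V x y z (Conj f g)"
  unfolding transitive_at_def by auto

lemma transitive_at_Tens:
  assumes "unsat_or_pointwise_true W V f" and "unsat_or_pointwise_true W V g"
    and "x \<in> W" "y \<in> W" "z \<in> W"
    and "transitive_at V x y z f" and "transitive_at V x y z g"
  shows "transitive_at V x y z (Tens f g)"
proof -
  have pairs: "{x, y} \<subseteq> W" "{y, z} \<subseteq> W" "{x, z} \<subseteq> W"
    using assms(3-5) by auto
  consider (f_unsat) "\<forall>s\<subseteq>W. s \<noteq> {} \<longrightarrow> \<not> supp V s f"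
    | (g_unsat) "\<forall>s\<subseteq>W. s \<noteq> {} \<longrightarrow> \<not> supp V s g"
    | (pointwise) "\<forall>w\<in>W. supp V {w} f" "\<forall>w\<in>W. supp V {w} g"
    using assms(1,2) unfolding unsat_or_pointwise_true_def by blast
  then show ?thesis
  proof cases
    case f_unsat
    then have "supp V s (Tens f g) \<longleftrightarrow> supp V s g" if "s \<subseteq> W" for s
      using supp_Tens_unsat_left that by metis
    with assms(7) pairs show ?thesis
      unfolding transitive_at_def by (simp del: supp.simps(6))
  next
    case g_unsat
    then have "supp V s (Tens f g) \<longleftrightarrow> supp V s f" if "s \<subseteq> W" for s
      using supp_Tens_unsat_right that by metis
    with assms(6) pairs show ?thesis
      unfolding transitive_at_def by (simp del: supp.simps(6))
  next
    case pointwise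
    then have "supp V {x} f" "supp V {z} g"
      using assms(3,5) by auto
    then have "supp V {x, z} (Tens f g)"
      by (simp only: supp.simps(6)) (metis insert_is_Un)
    then show ?thesis
      unfolding transitive_at_def by blast
  qed
qed

lemma transitive_at_equiv_in:
  assumes "equiv_in W V f g" and "x \<in> W" "y \<in> W" "z \<in> W"
  shows "transitive_at V x y z f \<longleftrightarrow> transitive_at V x y z g"
proof -
  have "{x, y} \<subseteq> W" "{y, z} \<subseteq> W" "{x, z} \<subseteq> W"
    using assms(2-4) by auto
  with assms(1) show ?thesis
    unfolding equiv_in_def transitive_at_def by (simp del: supp.simps)
qed

lemma Vpq_inter_letters:
  "p \<notin> letters f \<Longrightarrow> q \<notin> letters f \<Longrightarrow> Vpq p q w \<inter> letters f = {}"
  by (auto simp: Vpq_def)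

definition tame_in_Mpq :: "nat \<Rightarrow> nat \<Rightarrow> form \<Rightarrow> bool" where
  "tame_in_Mpq p q f \<longleftrightarrow> unsat_or_pointwise_true Wpq (Vpq p q) f \<and> transitive_at (Vpq p q) 1 2 3 f"

lemma letter_free_tame_in_Mpq:
  assumes "p \<notin> letters f" and "q \<notin> letters f"
  shows "tame_in_Mpq p q f"
  unfolding tame_in_Mpq_def
proof
  have const: "supp (Vpq p q) s f \<longleftrightarrow> supp (Vpq p q) t f" if "s \<noteq> {}" "t \<noteq> {}" for s t
    using Vpq_inter_letters[OF assms] that by (rule_tac supp_letter_free_nonempty) simp_all
  show "unsat_or_pointwise_true Wpq (Vpq p q) f"
  proof (cases "supp (Vpq p q) {1} f")
    case True
    then have "supp (Vpq p q) {w} f" for w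
      using const[of "{w}" "{1}"] by blast
    then show ?thesis
      unfolding unsat_or_pointwise_true_def by blast
  next
    case False
    then have "\<not> supp (Vpq p q) s f" if "s \<noteq> {}" for s
      using const[OF that, of "{1}"] by blast
    then show ?thesis
      unfolding unsat_or_pointwise_true_def by blast
  qed
  show "transitive_at (Vpq p q) 1 2 3 f"
    using const[of "{1, 3}" "{1, 2}"] unfolding transitive_at_def by blast
qed

lemma const_atoms_tame_in_Mpq:
  "tame_in_Mpq p q (const_atom (Atom p))" "tame_in_Mpq p q (const_atom (Atom q))"
  unfolding tame_in_Mpq_def transitive_at_def
  by (simp_all add: unsat_or_pointwise_true_Dep Vpq_def)

lemma not_transitive_at_IDisj_const_atoms_Mpq:
  assumes "p \<noteq> q"
  shows "\<not> transitive_at (Vpq p q) 1 2 3 (IDisj (const_atom (Atom p)) (const_atom (Atom q)))"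
proof -
  let ?disj = "IDisj (const_atom (Atom p)) (const_atom (Atom q))"
  have "supp (Vpq p q) {1, 2} ?disj" "supp (Vpq p q) {2, 3} ?disj"
    by (simp_all add: Vpq_def)
  moreover have "\<not> supp (Vpq p q) {1, 3} ?disj"
    using assms by (auto simp: Vpq_def)
  ultimately show ?thesis
    unfolding transitive_at_def by blast
qed

lemma subst_const_atoms_tame_in_Mpq:
  assumes "dplus phi" and "p \<notin> letters phi" and "q \<notin> letters phi"
  shows "tame_in_Mpq p q (subst2 phi a b (const_atom (Atom p)) (const_atom (Atom q)))"
  using assms
proof (induction phi)
  case (Atom r)
  then show ?case
    using letter_free_tame_in_Mpq[of p "Atom r" q] const_atoms_tame_in_Mpq[of p q] by simp
next
  case (NegAtom r)
  then show ?case
    using letter_free_tame_in_Mpq[of p "NegAtom r" q] by simp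
next
  case Bot
  then show ?case
    using letter_free_tame_in_Mpq[of p Bot q] by simp
next
  case (Dep as c)
  then show ?case
    using letter_free_tame_in_Mpq[of p "Dep as c" q] by simp
next
  case (Conj f g)
  then show ?case
    unfolding tame_in_Mpq_def by (simp add: unsat_or_pointwise_true_Conj transitive_at_Conj)
next
  case (Tens f g)
  let ?f_pq = "subst2 f a b (const_atom (Atom p)) (const_atom (Atom q))"
  let ?g_pq = "subst2 g a b (const_atom (Atom p)) (const_atom (Atom q))"
  have f: "unsat_or_pointwise_true Wpq (Vpq p q) ?f_pq" "transitive_at (Vpq p q) 1 2 3 ?f_pq"
    and g: "unsat_or_pointwise_true Wpq (Vpq p q) ?g_pq" "transitive_at (Vpq p q) 1 2 3 ?g_pq"
    using Tens unfolding tame_in_Mpq_def by simp_all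
  have W: "1 \<in> Wpq" "2 \<in> Wpq" "3 \<in> Wpq"
    by (simp_all add: Wpq_def)
  show ?case
    unfolding subst2.simps tame_in_Mpq_def
    using unsat_or_pointwise_true_Tens[OF f(1) g(1)] transitive_at_Tens[OF f(1) g(1) W f(2) g(2)] ..
qed simp

theorem theorem7:
  fixes phi :: form and a b p q :: nat
  assumes "is_context phi a b"
    and "p \<noteq> q"
    and "p \<notin> letters phi" and "q \<notin> letters phi"
  shows "\<not> equiv_in Wpq (Vpq p q) (subst2 phi a b (const_atom (Atom p)) (const_atom (Atom q)))
                (IDisj (const_atom (Atom p)) (const_atom (Atom q)))
       \<and> \<not> equiv_all (subst2 phi a b (const_atom (Atom p)) (const_atom (Atom q)))
                (IDisj (const_atom (Atom p)) (const_atom (Atom q)))"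
proof -
  let ?phi_pq = "subst2 phi a b (const_atom (Atom p)) (const_atom (Atom q))"
  let ?disj = "IDisj (const_atom (Atom p)) (const_atom (Atom q))"
  have "dplus phi"
    using assms(1) unfolding is_context_def by simp
  with assms(3,4) have phi_pq: "transitive_at (Vpq p q) 1 2 3 ?phi_pq"
    using subst_const_atoms_tame_in_Mpq unfolding tame_in_Mpq_def by blast
  have W: "1 \<in> Wpq" "2 \<in> Wpq" "3 \<in> Wpq"
    by (simp_all add: Wpq_def)
  have not_equiv_in: "\<not> equiv_in Wpq (Vpq p q) ?phi_pq ?disj"
  proof
    assume "equiv_in Wpq (Vpq p q) ?phi_pq ?disj"
    with phi_pq not_transitive_at_IDisj_const_atoms_Mpq[OF assms(2)] show False
      using transitive_at_equiv_in[OF _ W] by blast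
  qed
  moreover have "\<not> equiv_all ?phi_pq ?disj"
  proof
    assume "equiv_all ?phi_pq ?disj"
    then have "equiv_in Wpq (Vpq p q) ?phi_pq ?disj"
      unfolding equiv_all_def by simp
    with not_equiv_in show False ..
  qed
  ultimately show ?thesis ..
qed

end
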